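(* Let $G^*$ be a finite graph in which every vertex and every edge is contained in a triangle, and consider the domination game on $G^*$ in which Dominator makes the odd-numbered moves and always plays greedily (as defined in the context), while Staller plays arbitrary legal moves. If $i$ is odd and the $i$th turn belongs to Phase 1, then either $g_i+g_{i+1}\ge 72$, or the game ends with the $i$th turn and $g_i>36$.
   Context: For a vertex $v$, $N[v]$ is $v$ together with its neighbors, $N[S]=\bigcup_{v\in S}N[v]$. Domination game: Dominator (odd turns) and Staller (even turns) alternately choose vertices $p_1,p_2,\dots$; with $D_i=\{p_1,\dots,p_i\}$ ($D_0=\emptyset$) each move must satisfy $N[p_i]\setminus N[D_{i-1}]\neq\emptyset$; the game ends when $N[D_i]=V(G^* )$. After turn $i$ ($i\ge0$) a vertex $v$ is white if $v\notin N[D_i]$, blue if $v\in N[D_i]$ but $N[v]\not\subseteq N[D_i]$, and red if $N[v]\subseteq N[D_i]$. The W-degree of $v$ after turn $i$ is its number of white neighbors. Phases: for odd $i$, if after turn $i-1$ there is a white vertex of W-degree at least $4$ or a blue vertex of W-degree at least $5$, then turns $i$ and $i+1$ (if it exists) belong to Phase 1; otherwise they belong to Phase 2. In Phase 1 the weight of a vertex is $20$ if white, $12$ if blue, $0$ if red; the weight after turn $i$ is the sum of vertex weights, and $g_i$ is the weight after turn $i-1$ minus the weight after turn $i$. Dominator plays greedily: in each of his turns he chooses a legal vertex maximizing $g_i$. *)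

theory Defs
  imports Main
begin

definition simple_graph :: "'a set \<Rightarrow> ('a \<Rightarrow> 'a \<Rightarrow> bool) \<Rightarrow> bool" where
  "simple_graph V E \<longleftrightarrow> finite V \<and> (\<forall>u v. E u v \<longrightarrow> E v u) \<and> (\<forall>v. \<not> E v v)
     \<and> (\<forall>u v. E u v \<longrightarrow> u \<in> V \<and> v \<in> V)"

definition triangle_covered :: "'a set \<Rightarrow> ('a \<Rightarrow> 'a \<Rightarrow> bool) \<Rightarrow> bool" where
  "triangle_covered V E \<longleftrightarrow>
     (\<forall>v\<in>V. \<exists>u w. E v u \<and> E v w \<and> E u w) \<and> (\<forall>u v. E u v \<longrightarrow> (\<exists>w. E u w \<and> E v w))"

definition cnbh :: "'a set \<Rightarrow> ('a \<Rightarrow> 'a \<Rightarrow> bool) \<Rightarrow> 'a \<Rightarrow> 'a set" where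
  "cnbh V E v = insert v {u \<in> V. E v u}"

definition cnbhs :: "'a set \<Rightarrow> ('a \<Rightarrow> 'a \<Rightarrow> bool) \<Rightarrow> 'a set \<Rightarrow> 'a set" where
  "cnbhs V E S = (\<Union>v\<in>S. cnbh V E v)"

definition white :: "'a set \<Rightarrow> ('a \<Rightarrow> 'a \<Rightarrow> bool) \<Rightarrow> 'a set \<Rightarrow> 'a \<Rightarrow> bool" where
  "white V E D v \<longleftrightarrow> v \<in> V \<and> v \<notin> cnbhs V E D"

definition blue :: "'a set \<Rightarrow> ('a \<Rightarrow> 'a \<Rightarrow> bool) \<Rightarrow> 'a set \<Rightarrow> 'a \<Rightarrow> bool" where
  "blue V E D v \<longleftrightarrow> v \<in> V \<and> v \<in> cnbhs V E D \<and> \<not> cnbh V E v \<subseteq> cnbhs V E D"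

definition wdeg :: "'a set \<Rightarrow> ('a \<Rightarrow> 'a \<Rightarrow> bool) \<Rightarrow> 'a set \<Rightarrow> 'a \<Rightarrow> nat" where
  "wdeg V E D v = card {u. E v u \<and> white V E D u}"

definition phase1 :: "'a set \<Rightarrow> ('a \<Rightarrow> 'a \<Rightarrow> bool) \<Rightarrow> 'a set \<Rightarrow> bool" where
  "phase1 V E D \<longleftrightarrow> (\<exists>v. (white V E D v \<and> wdeg V E D v \<ge> 4) \<or> (blue V E D v \<and> wdeg V E D v \<ge> 5))"

definition weight1 :: "'a set \<Rightarrow> ('a \<Rightarrow> 'a \<Rightarrow> bool) \<Rightarrow> 'a set \<Rightarrow> int" where
  "weight1 V E D = 20 * int (card {v. white V E D v}) + 12 * int (card {v. blue V E D v})"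

definition legal :: "'a set \<Rightarrow> ('a \<Rightarrow> 'a \<Rightarrow> bool) \<Rightarrow> 'a set \<Rightarrow> 'a \<Rightarrow> bool" where
  "legal V E D p \<longleftrightarrow> p \<in> V \<and> cnbh V E p - cnbhs V E D \<noteq> {}"

text \<open>A complete play of the domination game: ps ! (i-1) is the move p_i (turn i, 1-based);
  D_j = set (take j ps). Every move is legal and the game ends after the last move.\<close>
definition dom_game :: "'a set \<Rightarrow> ('a \<Rightarrow> 'a \<Rightarrow> bool) \<Rightarrow> 'a list \<Rightarrow> bool" where
  "dom_game V E ps \<longleftrightarrow> (\<forall>j < length ps. legal V E (set (take j ps)) (ps ! j))
     \<and> cnbhs V E (set ps) = V"

definition gain :: "'a set \<Rightarrow> ('a \<Rightarrow> 'a \<Rightarrow> bool) \<Rightarrow> 'a list \<Rightarrow> nat \<Rightarrow> int" where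
  "gain V E ps i = weight1 V E (set (take (i - 1) ps)) - weight1 V E (set (take i ps))"

definition greedy_dominator :: "'a set \<Rightarrow> ('a \<Rightarrow> 'a \<Rightarrow> bool) \<Rightarrow> 'a list \<Rightarrow> bool" where
  "greedy_dominator V E ps \<longleftrightarrow>
     (\<forall>i. odd i \<and> 1 \<le> i \<and> i \<le> length ps \<and> phase1 V E (set (take (i - 1) ps)) \<longrightarrow>
        (\<forall>p. legal V E (set (take (i - 1) ps)) p \<longrightarrow>
           weight1 V E (set (take (i - 1) ps)) - weight1 V E (insert p (set (take (i - 1) ps)))
             \<le> gain V E ps i))"

end

theory Submission
  imports Defs
begin

text \<open>Playing a vertex p makes p red and every white neighbour of p non-white, so the Phase-1
  weight drops by at least the weight of p plus 8 per white neighbour of p. In Phase 1 some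
  vertex is white of W-degree at least 4 or blue of W-degree at least 5; either way playing it
  gains at least 20 + 4 * 8 = 12 + 5 * 8 = 52, so the greedy Dominator gains at least 52. Any
  legal move gains at least 20: the played vertex is either white, or blue with a white
  neighbour. Hence g_i + g_(i+1) \<ge> 72, and g_i \<ge> 52 > 36 if the game ends at turn i.\<close>

definition vertex_weight1 :: "'a set \<Rightarrow> ('a \<Rightarrow> 'a \<Rightarrow> bool) \<Rightarrow> 'a set \<Rightarrow> 'a \<Rightarrow> int" where
  "vertex_weight1 V E D v = (if white V E D v then 20 else 0) + (if blue V E D v then 12 else 0)"

lemma vertex_weight1_white: "white V E D v \<Longrightarrow> vertex_weight1 V E D v = 20"
  by (auto simp: vertex_weight1_def white_def blue_def)

lemma vertex_weight1_blue: "blue V E D v \<Longrightarrow> vertex_weight1 V E D v = 12"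
  by (auto simp: vertex_weight1_def white_def blue_def)

lemma weight1_eq_sum:
  assumes "finite V"
  shows "weight1 V E D = (\<Sum>v\<in>V. vertex_weight1 V E D v)"
proof -
  have count: "(\<Sum>v\<in>V. if P v then (k::int) else 0) = k * int (card {v\<in>V. P v})" for P k
    using sum.inter_filter[OF assms, of "\<lambda>_. k" P, symmetric] by simp
  have "{v. white V E D v} = {v\<in>V. white V E D v}" "{v. blue V E D v} = {v\<in>V. blue V E D v}"
    by (auto simp: white_def blue_def)
  then show ?thesis
    unfolding weight1_def vertex_weight1_def sum.distrib count by simp
qed

lemma cnbhs_insert: "cnbhs V E (insert p D) = cnbh V E p \<union> cnbhs V E D"
  by (simp add: cnbhs_def)

lemma vertex_weight1_antimono:
  "cnbhs V E D \<subseteq> cnbhs V E D' \<Longrightarrow> vertex_weight1 V E D' v \<le> vertex_weight1 V E D v"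
  unfolding vertex_weight1_def white_def blue_def by auto

lemma vertex_weight1_insert_self: "vertex_weight1 V E (insert p D) p = 0"
  by (auto simp: vertex_weight1_def white_def blue_def cnbhs_insert cnbh_def)

lemma vertex_weight1_drop_white_neighbour:
  assumes "E p u" "white V E D u"
  shows "8 \<le> vertex_weight1 V E D u - vertex_weight1 V E (insert p D) u"
proof -
  have "\<not> white V E (insert p D) u"
    using assms by (auto simp: white_def cnbhs_insert cnbh_def)
  then show ?thesis
    using assms(2) by (auto simp: vertex_weight1_def white_def blue_def)
qed

lemma weight1_drop_ge_sum:
  assumes "finite V" "cnbhs V E D \<subseteq> cnbhs V E D'" "S \<subseteq> V"
  shows "(\<Sum>v\<in>S. vertex_weight1 V E D v - vertex_weight1 V E D' v) \<le> weight1 V E D - weight1 V E D'"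
proof -
  have "(\<Sum>v\<in>S. vertex_weight1 V E D v - vertex_weight1 V E D' v)
      \<le> (\<Sum>v\<in>V. vertex_weight1 V E D v - vertex_weight1 V E D' v)"
    using assms by (intro sum_mono2) (auto intro: vertex_weight1_antimono)
  also have "\<dots> = weight1 V E D - weight1 V E D'"
    using assms(1) by (simp add: weight1_eq_sum sum_subtractf)
  finally show ?thesis .
qed

lemma weight1_drop_ge_wdeg:
  assumes "simple_graph V E" "p \<in> V"
  shows "vertex_weight1 V E D p + 8 * int (wdeg V E D p) \<le> weight1 V E D - weight1 V E (insert p D)"
proof -
  define W where "W = {u. E p u \<and> white V E D u}"
  have fin: "finite V" and WV: "W \<subseteq> V" and pW: "p \<notin> W"
    using assms(1) by (auto simp: simple_graph_def W_def)
  then have finW: "finite W" using finite_subset by blast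
  let ?drop = "\<lambda>u. vertex_weight1 V E D u - vertex_weight1 V E (insert p D) u"
  have "(\<Sum>u\<in>W. 8) \<le> (\<Sum>u\<in>W. ?drop u)"
    by (rule sum_mono) (auto simp: W_def intro: vertex_weight1_drop_white_neighbour)
  then have "8 * int (card W) \<le> (\<Sum>u\<in>W. ?drop u)"
    by (simp add: mult.commute)
  then have "vertex_weight1 V E D p + 8 * int (card W) \<le> (\<Sum>u\<in>insert p W. ?drop u)"
    using finW pW by (simp add: vertex_weight1_insert_self)
  also have "\<dots> \<le> weight1 V E D - weight1 V E (insert p D)"
    using weight1_drop_ge_sum[OF fin, of E D "insert p D" "insert p W"] WV assms(2)
    by (auto simp: cnbhs_insert)
  finally show ?thesis by (simp add: wdeg_def W_def)
qed

lemma legal_move_weight1_drop: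
  assumes "simple_graph V E" "legal V E D p"
  shows "20 \<le> weight1 V E D - weight1 V E (insert p D)"
proof -
  have pV: "p \<in> V" using assms(2) by (simp add: legal_def)
  note drop = weight1_drop_ge_wdeg[OF assms(1) pV, of D]
  show ?thesis
  proof (cases "white V E D p")
    case True
    then show ?thesis using drop by (simp add: vertex_weight1_white)
  next
    case False
    obtain u where u: "u \<in> cnbh V E p" "u \<notin> cnbhs V E D"
      using assms(2) by (auto simp: legal_def)
    have pD: "p \<in> cnbhs V E D" using False pV by (simp add: white_def)
    then have blue: "blue V E D p" using pV u by (auto simp: blue_def)
    have "u \<in> {w. E p w \<and> white V E D w}"
      using u pD by (auto simp: cnbh_def white_def)
    moreover have "finite {w. E p w \<and> white V E D w}"
      using assms(1) by (auto simp: simple_graph_def white_def)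
    ultimately have "wdeg V E D p \<noteq> 0"
      by (auto simp: wdeg_def)
    with blue show ?thesis using drop by (simp add: vertex_weight1_blue)
  qed
qed

lemma phase1_weight1_drop:
  assumes "simple_graph V E" "phase1 V E D"
  obtains p where "legal V E D p" "52 \<le> weight1 V E D - weight1 V E (insert p D)"
proof -
  obtain v where v: "white V E D v \<and> 4 \<le> wdeg V E D v \<or> blue V E D v \<and> 5 \<le> wdeg V E D v"
    using assms(2) by (auto simp: phase1_def)
  have "v \<in> V" using v by (auto simp: white_def blue_def)
  note drop = weight1_drop_ge_wdeg[OF assms(1) this, of D]
  have "legal V E D v"
    using v by (auto simp: legal_def white_def blue_def cnbh_def)
  moreover have "52 \<le> weight1 V E D - weight1 V E (insert v D)"
    using v drop by (auto simp: vertex_weight1_white vertex_weight1_blue)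
  ultimately show thesis by (rule that)
qed

theorem lemma2:
  fixes V :: "'a set" and E :: "'a \<Rightarrow> 'a \<Rightarrow> bool" and ps :: "'a list" and i :: nat
  assumes "simple_graph V E"
    and "triangle_covered V E"
    and "dom_game V E ps"
    and "greedy_dominator V E ps"
    and "odd i" and "1 \<le> i" and "i \<le> length ps"
    and "phase1 V E (set (take (i - 1) ps))"
  shows "(i < length ps \<and> gain V E ps i + gain V E ps (Suc i) \<ge> 72)
         \<or> (i = length ps \<and> gain V E ps i > 36)"
proof -
  obtain p where "legal V E (set (take (i - 1) ps)) p"
    "52 \<le> weight1 V E (set (take (i - 1) ps)) - weight1 V E (insert p (set (take (i - 1) ps)))"
    using phase1_weight1_drop[OF assms(1,8)] .
  then have greedy: "52 \<le> gain V E ps i"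
    using assms(4-8) unfolding greedy_dominator_def by fastforce
  show ?thesis
  proof (cases "i < length ps")
    case True
    then have "legal V E (set (take i ps)) (ps ! i)"
      using assms(3) by (simp add: dom_game_def)
    then have "20 \<le> gain V E ps (Suc i)"
      using legal_move_weight1_drop[OF assms(1)] True by (simp add: gain_def take_Suc_conv_app_nth)
    then show ?thesis using greedy True by simp
  next
    case False
    then show ?thesis using greedy assms(7) by simp
  qed
qed

end
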